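(* Let $r_1 \ge 2$ and $x_1 \ge 1$ be integers, let $d = x_1 + r_1 - 1$, and let $\mathbf{q} = (q_1,\ldots,q_d) \in \mathbb{Z}^d$ be the vector whose first $x_1$ entries equal $r_1$ and whose last $r_1 - 1$ entries equal $1 + r_1 x_1$. Let $\Delta_{(1,\mathbf{q})} = \mathrm{conv}\{\mathbf{e}_1,\ldots,\mathbf{e}_d, -\mathbf{q}\} \subset \mathbb{R}^d$. Define $\mathbf{a}'_{r_1+1} = ((-1)^{x_1}, (-x_1)^{r_1-1})$, $\mathbf{a}'_{r_1+2} = (0^{x_1}, (-1)^{r_1-1})$, $\mathbf{a}'_{r_1+3} = \mathbf{0}$, $\mathbf{a}'_i = (r_1 - i + 1)\mathbf{a}'_{r_1+1} + \mathbf{a}'_{r_1+2}$ for $1 \le i \le r_1$, and $\mathbf{b}'_j = \mathbf{e}_{d-j+1}$ for $1 \le j \le d$, and let $\mathcal{A}' = \{\mathbf{a}'_1,\ldots,\mathbf{a}'_{r_1+3},\mathbf{b}'_1,\ldots,\mathbf{b}'_d\}$. Then $\Delta_{(1,\mathbf{q})} \cap \mathbb{Z}^d = \mathcal{A}'$.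
   Context: $\mathbf{e}_i$ is the $i$-th standard basis vector of $\mathbb{R}^d$. The notation $(c_1^{y_1}, c_2^{y_2})$ denotes the vector consisting of $y_1$ copies of $c_1$ followed by $y_2$ copies of $c_2$. (These simplices are exactly the reflexive, integer-decomposition-property simplices $\Delta_{(1,\mathbf{q})}$ with $\mathbf{q}$ having two distinct parts and smallest part $r_1>1$.) *)

theory Defs
  imports "HOL-Analysis.Analysis"
begin

text \<open>Points of R^d are modelled as functions nat => real supported on the
coordinates 1..d; lattice points as functions nat => int supported on 1..d.\<close>

definition fin_conv_hull :: "(nat \<Rightarrow> real) set \<Rightarrow> (nat \<Rightarrow> real) set" where
  "fin_conv_hull V = {p. \<exists>u. (\<forall>v\<in>V. 0 \<le> u v) \<and> sum u V = 1 \<and>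
                         p = (\<lambda>k. \<Sum>v\<in>V. u v * v k)}"

definition unit_vec :: "nat \<Rightarrow> nat \<Rightarrow> int" where
  "unit_vec i = (\<lambda>k. if k = i then 1 else 0)"

end

(*
  A point z lies in conv {e_1, ..., e_d, -q} (q > 0) iff its barycentric coordinates are
  nonnegative; the coordinate at -q is forced to be (1 - sum z) / (1 + sum q), so membership
  is a system of linear inequalities in z.  For the two-block vector q one has
  1 + sum q = r1 (1 + r1 x1), and the inequalities become sum z <= 1,
  (1 + r1 x1) z_k >= sum z - 1 on the first block and r1 z_k >= sum z - 1 on the second.
  For an integer point let alpha, beta be the minima of z on the two blocks and s the excess
  of z over these minima.  The inequalities at the minimising coordinates force either
  alpha, beta >= 0, and then z is 0 or a unit vector, or s = 0 and (alpha, beta) is one of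
  (-m, -(m x1 + 1)) with 1 <= m <= r1, (-1, -x1) or (0, -1).
*)
theory Submission
  imports Defs
begin

definition real_unit_vec :: "nat \<Rightarrow> nat \<Rightarrow> real" where
  "real_unit_vec i = (\<lambda>k. real_of_int (unit_vec i k))"

lemma real_unit_vec_apply: "real_unit_vec i k = (if k = i then 1 else 0)"
  by (simp add: real_unit_vec_def unit_vec_def)

lemma neg_nonneg_notin_real_unit_vecs:
  assumes "\<forall>k. 0 \<le> q k"
  shows "(\<lambda>k. - q k) \<notin> real_unit_vec ` A"
proof
  assume "(\<lambda>k. - q k) \<in> real_unit_vec ` A"
  then obtain j where "- q j = real_unit_vec j j"
    by (auto simp: fun_eq_iff)
  then show False
    using assms by (simp add: real_unit_vec_apply) (metis neg_0_le_iff_le not_one_le_zero)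
qed

lemma sum_simplex_vertices:
  assumes "\<forall>k. 0 \<le> q k"
  shows "(\<Sum>v\<in>insert (\<lambda>k. - q k) (real_unit_vec ` {1..d}). g v)
      = g (\<lambda>k. - q k) + (\<Sum>j\<in>{1..d}. g (real_unit_vec j))"
proof -
  have "inj real_unit_vec"
    by (rule injI) (metis real_unit_vec_apply zero_neq_one)
  then show ?thesis
    using neg_nonneg_notin_real_unit_vecs[OF assms]
    by (simp add: sum.reindex inj_on_subset[of _ UNIV])
qed

lemma simplex_vertices_combination:
  assumes "\<forall>k. 0 \<le> q k"
  shows "(\<Sum>v\<in>insert (\<lambda>k. - q k) (real_unit_vec ` {1..d}). u v * v k)
      = (if k \<in> {1..d} then u (real_unit_vec k) else 0) - u (\<lambda>k. - q k) * q k"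
  unfolding sum_simplex_vertices[OF assms]
  by (simp add: real_unit_vec_apply if_distrib cong: if_cong)

lemma mem_fin_conv_hull_simplex:
  fixes p q :: "nat \<Rightarrow> real"
  assumes q_nonneg: "\<forall>k. 0 \<le> q k" and q_supp: "\<forall>k. k \<notin> {1..d} \<longrightarrow> q k = 0"
  shows "p \<in> fin_conv_hull (insert (\<lambda>k. - q k) (real_unit_vec ` {1..d}))
     \<longleftrightarrow> (\<forall>k. k \<notin> {1..d} \<longrightarrow> p k = 0) \<and>
         (\<exists>\<mu>\<ge>0. (\<forall>k\<in>{1..d}. 0 \<le> p k + \<mu> * q k) \<and> (\<Sum>k\<in>{1..d}. p k + \<mu> * q k) + \<mu> = 1)"
    (is "_ \<longleftrightarrow> ?supp \<and> ?coeffs")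
proof -
  define P where "P = (\<lambda>k. - q k)"
  define V where "V = insert P (real_unit_vec ` {1..d})"
  note sum_V = sum_simplex_vertices[where d = d, OF q_nonneg, folded P_def, folded V_def]
  note combination = simplex_vertices_combination[where d = d, OF q_nonneg, folded P_def, folded V_def]
  show ?thesis
    unfolding fin_conv_hull_def V_def[symmetric] P_def[symmetric] mem_Collect_eq
  proof (intro iffI)
    assume "\<exists>u. (\<forall>v\<in>V. 0 \<le> u v) \<and> sum u V = 1 \<and> p = (\<lambda>k. \<Sum>v\<in>V. u v * v k)"
    then obtain u where u_nonneg: "\<forall>v\<in>V. 0 \<le> u v" and "sum u V = 1"
      and p_eq: "p = (\<lambda>k. \<Sum>v\<in>V. u v * v k)"
      by blast
    have coeff: "p k + u P * q k = u (real_unit_vec k)" if "k \<in> {1..d}" for k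
      using that unfolding p_eq combination by simp
    have ?supp
      using q_supp unfolding p_eq combination by auto
    moreover have "(\<Sum>k\<in>{1..d}. p k + u P * q k) + u P = 1"
      using \<open>sum u V = 1\<close> unfolding sum_V by (simp add: coeff)
    moreover have "0 \<le> u P" "\<forall>k\<in>{1..d}. 0 \<le> p k + u P * q k"
      using u_nonneg coeff by (auto simp: V_def)
    ultimately show "?supp \<and> ?coeffs"
      by blast
  next
    assume "?supp \<and> ?coeffs"
    then obtain \<mu> :: real where p_supp: ?supp and "0 \<le> \<mu>"
      and coeff_nonneg: "\<forall>k\<in>{1..d}. 0 \<le> p k + \<mu> * q k"
      and coeff_sum: "(\<Sum>k\<in>{1..d}. p k + \<mu> * q k) + \<mu> = 1"
      by blast
    define u where "u v = (if v = P then \<mu> else \<Sum>k\<in>{1..d}. v k * (p k + \<mu> * q k))" for v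
    have u_P: "u P = \<mu>"
      by (simp add: u_def)
    have u_unit: "u (real_unit_vec j) = p j + \<mu> * q j" if "j \<in> {1..d}" for j
    proof -
      have "real_unit_vec j \<noteq> P"
        using that neg_nonneg_notin_real_unit_vecs[OF q_nonneg, of "{1..d}"] unfolding P_def by (metis imageI)
      then show ?thesis
        using that by (simp add: u_def real_unit_vec_apply if_distrib if_distribR cong: if_cong)
    qed
    have "\<forall>v\<in>V. 0 \<le> u v"
      using \<open>0 \<le> \<mu>\<close> coeff_nonneg u_P u_unit by (auto simp: V_def)
    moreover have "sum u V = 1"
      using coeff_sum u_unit unfolding sum_V u_P by simp
    moreover have "p = (\<lambda>k. \<Sum>v\<in>V. u v * v k)"
      unfolding combination u_P using u_unit p_supp q_supp by (auto simp: fun_eq_iff)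
    ultimately show "\<exists>u. (\<forall>v\<in>V. 0 \<le> u v) \<and> sum u V = 1 \<and> p = (\<lambda>k. \<Sum>v\<in>V. u v * v k)"
      by blast
  qed
qed

lemma ex_nonneg_weight_iff:
  fixes p q :: "'a \<Rightarrow> real"
  assumes "0 < c"
  shows "(\<exists>\<mu>\<ge>0. (\<forall>k\<in>A. 0 \<le> p k + \<mu> * q k) \<and> S + \<mu> * c = 1)
     \<longleftrightarrow> S \<le> 1 \<and> (\<forall>k\<in>A. 0 \<le> c * p k + (1 - S) * q k)"
proof -
  have scaled: "c * (p k + \<mu> * q k) = c * p k + (1 - S) * q k" if "S + \<mu> * c = 1" for \<mu> k
  proof -
    have "c * (p k + \<mu> * q k) = c * p k + (\<mu> * c) * q k"
      by (simp add: algebra_simps)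
    also have "\<mu> * c = 1 - S"
      using that by simp
    finally show ?thesis .
  qed
  show ?thesis
  proof
    assume "\<exists>\<mu>\<ge>0. (\<forall>k\<in>A. 0 \<le> p k + \<mu> * q k) \<and> S + \<mu> * c = 1"
    then obtain \<mu> where "0 \<le> \<mu>" and nonneg: "\<forall>k\<in>A. 0 \<le> p k + \<mu> * q k" and \<mu>: "S + \<mu> * c = 1"
      by blast
    have "S \<le> 1"
      using \<mu> \<open>0 \<le> \<mu>\<close> \<open>0 < c\<close> by (smt (verit) mult_nonneg_nonneg)
    moreover have "0 \<le> c * p k + (1 - S) * q k" if "k \<in> A" for k
      using nonneg that \<open>0 < c\<close> scaled[OF \<mu>, of k] by (metis less_imp_le mult_nonneg_nonneg)
    ultimately show "S \<le> 1 \<and> (\<forall>k\<in>A. 0 \<le> c * p k + (1 - S) * q k)"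
      by blast
  next
    assume "S \<le> 1 \<and> (\<forall>k\<in>A. 0 \<le> c * p k + (1 - S) * q k)"
    then have "S \<le> 1" and nonneg: "\<forall>k\<in>A. 0 \<le> c * p k + (1 - S) * q k"
      by blast+
    define \<mu> where "\<mu> = (1 - S) / c"
    have \<mu>: "S + \<mu> * c = 1"
      using \<open>0 < c\<close> by (simp add: \<mu>_def)
    have "0 \<le> p k + \<mu> * q k" if "k \<in> A" for k
      using nonneg that \<open>0 < c\<close> scaled[OF \<mu>, of k] by (metis zero_le_mult_iff not_less)
    moreover have "0 \<le> \<mu>"
      using \<open>S \<le> 1\<close> \<open>0 < c\<close> by (simp add: \<mu>_def)
    ultimately show "\<exists>\<mu>\<ge>0. (\<forall>k\<in>A. 0 \<le> p k + \<mu> * q k) \<and> S + \<mu> * c = 1"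
      using \<mu> by blast
  qed
qed

lemma mem_fin_conv_hull_simplex_iff:
  fixes p q :: "nat \<Rightarrow> real"
  assumes q_nonneg: "\<forall>k. 0 \<le> q k" and q_supp: "\<forall>k. k \<notin> {1..d} \<longrightarrow> q k = 0"
  shows "p \<in> fin_conv_hull (insert (\<lambda>k. - q k) (real_unit_vec ` {1..d}))
     \<longleftrightarrow> (\<forall>k. k \<notin> {1..d} \<longrightarrow> p k = 0) \<and> sum p {1..d} \<le> 1 \<and>
         (\<forall>k\<in>{1..d}. 0 \<le> (1 + sum q {1..d}) * p k + (1 - sum p {1..d}) * q k)"
proof -
  have "0 < 1 + sum q {1..d}"
    using q_nonneg by (simp add: sum_nonneg add_pos_nonneg)
  moreover have "(\<Sum>k\<in>{1..d}. p k + \<mu> * q k) + \<mu> = sum p {1..d} + \<mu> * (1 + sum q {1..d})" for \<mu>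
    by (simp add: sum.distrib sum_distrib_left algebra_simps)
  ultimately show ?thesis
    unfolding mem_fin_conv_hull_simplex[OF q_nonneg q_supp] by (simp only: ex_nonneg_weight_iff)
qed

lemma sum_eq_card_Min_plus_slack:
  fixes f :: "'a \<Rightarrow> int"
  assumes "finite A" "A \<noteq> {}"
  obtains m s where "m \<in> f ` A" "\<forall>k\<in>A. m \<le> f k" "sum f A = int (card A) * m + s" "0 \<le> s"
    "s = 0 \<Longrightarrow> \<forall>k\<in>A. f k = m"
proof -
  define m where "m = Min (f ` A)"
  define s where "s = (\<Sum>k\<in>A. f k - m)"
  have "m \<in> f ` A" and lower: "\<forall>k\<in>A. m \<le> f k"
    using assms by (simp_all add: m_def)
  moreover have "sum f A = int (card A) * m + s"
    by (simp add: s_def sum_subtractf)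
  moreover have "0 \<le> s"
    using lower by (simp add: s_def sum_nonneg)
  moreover have "\<forall>k\<in>A. f k = m" if "s = 0"
    using that lower \<open>finite A\<close> unfolding s_def by (subst (asm) sum_nonneg_eq_0_iff) auto
  ultimately show thesis
    using that by blast
qed

lemma nonneg_sum_le_one_cases:
  fixes z :: "nat \<Rightarrow> int"
  assumes supp: "\<forall>k. k \<notin> A \<longrightarrow> z k = 0" and "finite A"
    and nonneg: "\<forall>k\<in>A. 0 \<le> z k" and "sum z A \<le> 1"
  shows "z = (\<lambda>k. 0) \<or> (\<exists>j\<in>A. z = unit_vec j)"
proof (cases "\<forall>k\<in>A. z k = 0")
  case True
  then show ?thesis
    using supp by (auto simp: fun_eq_iff)
next
  case False
  then obtain j where j: "j \<in> A" "z j \<noteq> 0"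
    by blast
  have "sum z A = z j + sum z (A - {j})"
    using j(1) \<open>finite A\<close> by (simp add: sum.remove)
  moreover have "0 \<le> sum z (A - {j})"
    using nonneg by (intro sum_nonneg) auto
  moreover have "1 \<le> z j"
    using j nonneg by force
  ultimately have "z j = 1" and "sum z (A - {j}) = 0"
    using \<open>sum z A \<le> 1\<close> by linarith+
  then have "\<forall>k\<in>A - {j}. z k = 0"
    using nonneg \<open>finite A\<close> by (subst (asm) sum_nonneg_eq_0_iff) auto
  then have "z = unit_vec j"
    using supp \<open>z j = 1\<close> by (auto simp: unit_vec_def fun_eq_iff)
  then show ?thesis
    using j(1) by blast
qed

(* alpha, beta are the minima of a lattice point z on the two blocks, s is the excess of z over
   them, and the two bounds are the simplex inequalities at the minimising coordinates. *)
lemma two_block_minima_cases: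
  fixes \<alpha> \<beta> s r X :: int
  assumes "2 \<le> r" "1 \<le> X" "0 \<le> s"
    and bound1: "X * \<alpha> + (r - 1) * \<beta> + s - 1 \<le> (1 + r * X) * \<alpha>"
    and bound2: "X * \<alpha> + (r - 1) * \<beta> + s - 1 \<le> r * \<beta>"
  shows "s = 0 \<and> ((- r \<le> \<alpha> \<and> \<alpha> \<le> -1 \<and> \<beta> = X * \<alpha> - 1) \<or> (\<alpha> = -1 \<and> \<beta> = - X) \<or> (\<alpha> = 0 \<and> \<beta> = -1))
    \<or> (0 \<le> \<alpha> \<and> 0 \<le> \<beta>)"
proof -
  have upper: "(r - 1) * \<beta> \<le> (r - 1) * (X * \<alpha>) + \<alpha> + 1 - s"
    using bound1 by (simp add: algebra_simps)
  have lower: "X * \<alpha> + s - 1 \<le> \<beta>"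
    using bound2 by (simp add: algebra_simps)
  have "(r - 1) * (X * \<alpha> + s - 1) \<le> (r - 1) * \<beta>"
    using lower \<open>2 \<le> r\<close> by (simp add: mult_left_mono)
  with upper have slack: "r * s \<le> \<alpha> + r"
    by (simp add: algebra_simps)
  consider "\<alpha> \<le> -1" | "0 \<le> \<alpha>" "\<beta> \<le> -1" | "0 \<le> \<alpha>" "0 \<le> \<beta>"
    by linarith
  then show ?thesis
  proof cases
    case 1
    have "s = 0"
    proof (rule ccontr)
      assume "s \<noteq> 0"
      then have "r * 1 \<le> r * s"
        using \<open>0 \<le> s\<close> \<open>2 \<le> r\<close> by (intro mult_left_mono) auto
      then show False
        using slack 1 by simp
    qed
    have "(r - 1) * \<beta> \<le> (r - 1) * (X * \<alpha>)"
      using upper 1 \<open>0 \<le> s\<close> by linarith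
    then have "\<beta> \<le> X * \<alpha>"
      using \<open>2 \<le> r\<close> by (simp add: mult_le_cancel_left)
    moreover have "\<beta> = X * \<alpha> \<Longrightarrow> \<alpha> = -1"
      using upper 1 \<open>s = 0\<close> by simp
    ultimately show ?thesis
      using lower slack 1 \<open>s = 0\<close> by auto
  next
    case 2
    have "\<alpha> \<le> X * \<alpha>"
      using 2 \<open>1 \<le> X\<close> by (simp add: mult_le_cancel_right1)
    then show ?thesis
      using lower 2 \<open>0 \<le> s\<close> by auto
  qed simp
qed

lemma image_reflect_atLeastAtMost:
  fixes n :: nat
  assumes "\<And>i. i \<in> {1..n} \<Longrightarrow> g i = f (n - i + 1)"
  shows "g ` {1..n} = f ` {1..n}"
proof -
  have "(\<lambda>i. n - i + 1) ` {1..n} = {1..n}"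
  proof
    show "{1..n} \<subseteq> (\<lambda>i. n - i + 1) ` {1..n}"
    proof
      fix m assume "m \<in> {1..n}"
      then show "m \<in> (\<lambda>i. n - i + 1) ` {1..n}"
        by (intro rev_image_eqI[of "n - m + 1"]) auto
    qed
  qed auto
  moreover have "g ` {1..n} = f ` (\<lambda>i. n - i + 1) ` {1..n}"
    unfolding image_image using assms by (rule image_cong[OF refl])
  ultimately show ?thesis
    by simp
qed

definition two_block_vec :: "nat \<Rightarrow> nat \<Rightarrow> int \<Rightarrow> int \<Rightarrow> nat \<Rightarrow> int" where
  "two_block_vec x d c1 c2 = (\<lambda>k. if 1 \<le> k \<and> k \<le> x then c1 else if x < k \<and> k \<le> d then c2 else 0)"

locale two_block_simplex =
  fixes r1 x1 d :: nat
  assumes r1_ge: "2 \<le> r1" and x1_ge: "1 \<le> x1" and d_eq: "d = x1 + r1 - 1"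
begin

lemma sum_blocks: "sum f {1..d} = sum f {1..x1} + sum f {x1<..d}"
proof -
  have "{1..d} = {1..x1} \<union> {x1<..d}"
    using x1_ge r1_ge d_eq by (intro ivl_disj_un_two(8)[symmetric]) auto
  moreover have "{1..x1} \<inter> {x1<..d} = {}"
    by auto
  ultimately show ?thesis
    by (simp add: sum.union_disjoint)
qed

lemma sum_two_block_vec:
  "sum (two_block_vec x1 d c1 c2) {1..d} = int x1 * c1 + (int r1 - 1) * c2"
  unfolding sum_blocks using r1_ge d_eq by (simp add: two_block_vec_def)

abbreviation weights :: "nat \<Rightarrow> int" where
  "weights \<equiv> two_block_vec x1 d (int r1) (1 + int r1 * int x1)"

definition simplex_ineqs :: "(nat \<Rightarrow> int) \<Rightarrow> bool" where
  "simplex_ineqs z \<longleftrightarrow> (\<forall>k. k \<notin> {1..d} \<longrightarrow> z k = 0) \<and> sum z {1..d} \<le> 1 \<and>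
       (\<forall>k\<in>{1..x1}. sum z {1..d} - 1 \<le> (1 + int r1 * int x1) * z k) \<and>
       (\<forall>k\<in>{x1<..d}. sum z {1..d} - 1 \<le> int r1 * z k)"

lemma mem_simplex_iff_barycentric:
  "(\<forall>k. (k < 1 \<or> d < k) \<longrightarrow> z k = 0) \<and>
   (\<lambda>k. real_of_int (z k)) \<in> fin_conv_hull ((\<lambda>v k. real_of_int (v k)) ` (unit_vec ` {1..d} \<union> {\<lambda>k. - weights k}))
   \<longleftrightarrow> (\<forall>k. k \<notin> {1..d} \<longrightarrow> z k = 0) \<and> sum z {1..d} \<le> 1 \<and>
       (\<forall>k\<in>{1..d}. 0 \<le> (1 + sum weights {1..d}) * z k + (1 - sum z {1..d}) * weights k)"
proof -
  define q where "q k = real_of_int (weights k)" for k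
  have vertices: "(\<lambda>v k. real_of_int (v k)) ` (unit_vec ` {1..d} \<union> {\<lambda>k. - weights k})
      = insert (\<lambda>k. - q k) (real_unit_vec ` {1..d})"
    by (auto simp: q_def real_unit_vec_def)
  have q_nonneg: "\<forall>k. 0 \<le> q k"
    by (simp add: q_def two_block_vec_def)
  have q_supp: "\<forall>k. k \<notin> {1..d} \<longrightarrow> q k = 0"
    using d_eq by (auto simp: q_def two_block_vec_def)
  have cast: "(1 + sum q {1..d}) * real_of_int (z k) + (1 - (\<Sum>k\<in>{1..d}. real_of_int (z k))) * q k
      = real_of_int ((1 + sum weights {1..d}) * z k + (1 - sum z {1..d}) * weights k)" for k
    by (simp add: q_def)
  have sum_le: "(\<Sum>k\<in>{1..d}. real_of_int (z k)) \<le> 1 \<longleftrightarrow> sum z {1..d} \<le> 1"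
    by (simp flip: of_int_sum)
  have supp: "(\<forall>k. (k < 1 \<or> d < k) \<longrightarrow> z k = 0) \<longleftrightarrow> (\<forall>k. k \<notin> {1..d} \<longrightarrow> z k = 0)"
    by (simp add: not_le)
  show ?thesis
    unfolding vertices mem_fin_conv_hull_simplex_iff[OF q_nonneg q_supp] cast of_int_0_le_iff
      sum_le supp of_int_eq_0_iff
    by blast
qed

lemma barycentric_iff_block_ineqs:
  assumes "k \<in> {1..d}"
  shows "0 \<le> (1 + sum weights {1..d}) * c + (1 - S) * weights k \<longleftrightarrow>
    (if k \<le> x1 then S - 1 \<le> (1 + int r1 * int x1) * c else S - 1 \<le> int r1 * c)"
proof -
  define N where "N = 1 + int r1 * int x1"
  have "0 < r1" "0 < N"
    using r1_ge by (simp_all add: N_def add_pos_nonneg)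
  have "1 + sum weights {1..d} = int r1 * N"
    unfolding sum_two_block_vec N_def by (simp add: algebra_simps)
  then have "0 \<le> (1 + sum weights {1..d}) * c + (1 - S) * weights k
      \<longleftrightarrow> (if k \<le> x1 then 0 \<le> int r1 * (N * c + 1 - S) else 0 \<le> N * (int r1 * c + 1 - S))"
    using assms by (auto simp: two_block_vec_def N_def algebra_simps)
  also have "\<dots> \<longleftrightarrow> (if k \<le> x1 then S - 1 \<le> N * c else S - 1 \<le> int r1 * c)"
    using \<open>0 < r1\<close> \<open>0 < N\<close> by (auto simp: zero_le_mult_iff)
  finally show ?thesis
    unfolding N_def .
qed

lemma mem_simplex_iff:
  "(\<forall>k. (k < 1 \<or> d < k) \<longrightarrow> z k = 0) \<and>
   (\<lambda>k. real_of_int (z k)) \<in> fin_conv_hull ((\<lambda>v k. real_of_int (v k)) ` (unit_vec ` {1..d} \<union> {\<lambda>k. - weights k}))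
   \<longleftrightarrow> simplex_ineqs z"
proof -
  have "(\<forall>k\<in>{1..d}. 0 \<le> (1 + sum weights {1..d}) * z k + (1 - sum z {1..d}) * weights k)
      \<longleftrightarrow> (\<forall>k\<in>{1..d}. if k \<le> x1 then sum z {1..d} - 1 \<le> (1 + int r1 * int x1) * z k
                      else sum z {1..d} - 1 \<le> int r1 * z k)"
    by (rule ball_cong[OF refl barycentric_iff_block_ineqs])
  also have "\<dots> \<longleftrightarrow> (\<forall>k\<in>{1..x1}. sum z {1..d} - 1 \<le> (1 + int r1 * int x1) * z k) \<and>
      (\<forall>k\<in>{x1<..d}. sum z {1..d} - 1 \<le> int r1 * z k)"
    using d_eq r1_ge by auto
  finally show ?thesis
    unfolding mem_simplex_iff_barycentric simplex_ineqs_def by blast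
qed

lemma simplex_ineqs_two_block_vec:
  "simplex_ineqs (two_block_vec x1 d c1 c2) \<longleftrightarrow>
    int x1 * c1 + (int r1 - 1) * c2 \<le> 1 \<and>
    int x1 * c1 + (int r1 - 1) * c2 - 1 \<le> (1 + int r1 * int x1) * c1 \<and>
    int x1 * c1 + (int r1 - 1) * c2 - 1 \<le> int r1 * c2"
proof -
  have "x1 \<in> {1..x1}" "d \<in> {x1<..d}"
    using x1_ge r1_ge d_eq by auto
  then show ?thesis
    unfolding simplex_ineqs_def sum_two_block_vec by (auto simp: two_block_vec_def)
qed

lemma simplex_ineqs_unit_vec:
  assumes "j \<in> {1..d}"
  shows "simplex_ineqs (unit_vec j)"
proof -
  have "sum (unit_vec j) {1..d} = 1"
    using assms by (simp add: unit_vec_def)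
  then show ?thesis
    using assms by (auto simp: simplex_ineqs_def unit_vec_def)
qed

(* The set A' of the paper: a'_i for i <= r1 is the first family with m = r1 - i + 1. *)
definition block_and_unit_points :: "(nat \<Rightarrow> int) set" where
  "block_and_unit_points =
    (\<lambda>m. two_block_vec x1 d (- int m) (- (int m * int x1 + 1))) ` {1..r1} \<union>
    {two_block_vec x1 d (-1) (- int x1), two_block_vec x1 d 0 (-1), (\<lambda>k. 0)} \<union>
    unit_vec ` {1..d}"

lemma block_and_unit_points_simplex_ineqs:
  assumes "z \<in> block_and_unit_points"
  shows "simplex_ineqs z"
proof -
  have "simplex_ineqs (two_block_vec x1 d (- int m) (- (int m * int x1 + 1)))" if "m \<in> {1..r1}" for m
  proof -
    have "int m \<le> int r1"
      using that by simp
    then show ?thesis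
      unfolding simplex_ineqs_two_block_vec by (simp add: algebra_simps)
  qed
  moreover have "simplex_ineqs (two_block_vec x1 d (-1) (- int x1))"
    by (simp add: simplex_ineqs_two_block_vec algebra_simps flip: of_nat_mult)
  moreover have "simplex_ineqs (two_block_vec x1 d 0 (-1))"
    by (simp add: simplex_ineqs_two_block_vec algebra_simps)
  moreover have "simplex_ineqs (\<lambda>k. 0)"
  proof -
    have "(\<lambda>k. 0) = two_block_vec x1 d 0 0"
      by (simp add: two_block_vec_def fun_eq_iff)
    then show ?thesis
      using r1_ge by (simp add: simplex_ineqs_two_block_vec)
  qed
  ultimately show ?thesis
    using assms simplex_ineqs_unit_vec unfolding block_and_unit_points_def by blast
qed

lemma nonneg_simplex_ineqs_in_block_and_unit_points:
  assumes "simplex_ineqs z" and "\<forall>k\<in>{1..d}. 0 \<le> z k"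
  shows "z \<in> block_and_unit_points"
proof -
  have "z = (\<lambda>k. 0) \<or> (\<exists>j\<in>{1..d}. z = unit_vec j)"
    using assms by (intro nonneg_sum_le_one_cases) (auto simp: simplex_ineqs_def)
  then show ?thesis
    unfolding block_and_unit_points_def by blast
qed

lemma simplex_ineqs_block_minima:
  assumes "simplex_ineqs z"
  obtains \<alpha> \<beta> s where "\<forall>k\<in>{1..x1}. \<alpha> \<le> z k" and "\<forall>k\<in>{x1<..d}. \<beta> \<le> z k" and "0 \<le> s"
    and "sum z {1..d} = int x1 * \<alpha> + (int r1 - 1) * \<beta> + s"
    and "sum z {1..d} - 1 \<le> (1 + int r1 * int x1) * \<alpha>"
    and "sum z {1..d} - 1 \<le> int r1 * \<beta>"
    and "s = 0 \<Longrightarrow> z = two_block_vec x1 d \<alpha> \<beta>"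
proof -
  have "finite {1..x1}" "{1..x1} \<noteq> {}"
    using x1_ge by auto
  then obtain \<alpha> s1 where "\<alpha> \<in> z ` {1..x1}" and \<alpha>_le: "\<forall>k\<in>{1..x1}. \<alpha> \<le> z k"
    and sum1: "sum z {1..x1} = int (card {1..x1}) * \<alpha> + s1" and "0 \<le> s1"
    and const1: "s1 = 0 \<Longrightarrow> \<forall>k\<in>{1..x1}. z k = \<alpha>"
    by (rule sum_eq_card_Min_plus_slack[where f = z]) blast
  have "finite {x1<..d}" "{x1<..d} \<noteq> {}"
    using r1_ge d_eq by auto
  then obtain \<beta> s2 where "\<beta> \<in> z ` {x1<..d}" and \<beta>_le: "\<forall>k\<in>{x1<..d}. \<beta> \<le> z k"
    and sum2: "sum z {x1<..d} = int (card {x1<..d}) * \<beta> + s2" and "0 \<le> s2"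
    and const2: "s2 = 0 \<Longrightarrow> \<forall>k\<in>{x1<..d}. z k = \<beta>"
    by (rule sum_eq_card_Min_plus_slack[where f = z]) blast
  have sum_eq: "sum z {1..d} = int x1 * \<alpha> + (int r1 - 1) * \<beta> + (s1 + s2)"
    unfolding sum_blocks sum1 sum2 using r1_ge d_eq by simp
  have bounds: "sum z {1..d} - 1 \<le> (1 + int r1 * int x1) * \<alpha>" "sum z {1..d} - 1 \<le> int r1 * \<beta>"
    using assms \<open>\<alpha> \<in> z ` {1..x1}\<close> \<open>\<beta> \<in> z ` {x1<..d}\<close> unfolding simplex_ineqs_def by blast+
  have "z = two_block_vec x1 d \<alpha> \<beta>" if "s1 + s2 = 0"
    using that assms const1 const2 \<open>0 \<le> s1\<close> \<open>0 \<le> s2\<close>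
    by (auto simp: simplex_ineqs_def two_block_vec_def fun_eq_iff)
  moreover have "0 \<le> s1 + s2"
    using \<open>0 \<le> s1\<close> \<open>0 \<le> s2\<close> by simp
  ultimately show thesis
    using that[OF \<alpha>_le \<beta>_le _ sum_eq bounds] by blast
qed

lemma simplex_ineqs_in_block_and_unit_points:
  assumes ineqs: "simplex_ineqs z"
  shows "z \<in> block_and_unit_points"
proof -
  obtain \<alpha> \<beta> s where \<alpha>_le: "\<forall>k\<in>{1..x1}. \<alpha> \<le> z k" and \<beta>_le: "\<forall>k\<in>{x1<..d}. \<beta> \<le> z k"
    and "0 \<le> s" and sum_eq: "sum z {1..d} = int x1 * \<alpha> + (int r1 - 1) * \<beta> + s"
    and "sum z {1..d} - 1 \<le> (1 + int r1 * int x1) * \<alpha>" and "sum z {1..d} - 1 \<le> int r1 * \<beta>"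
    and blocks: "s = 0 \<Longrightarrow> z = two_block_vec x1 d \<alpha> \<beta>"
    using simplex_ineqs_block_minima[OF ineqs] by blast
  then consider
      "s = 0" "- int r1 \<le> \<alpha> \<and> \<alpha> \<le> -1 \<and> \<beta> = int x1 * \<alpha> - 1 \<or>
          \<alpha> = -1 \<and> \<beta> = - int x1 \<or> \<alpha> = 0 \<and> \<beta> = -1"
    | "0 \<le> \<alpha>" "0 \<le> \<beta>"
    using two_block_minima_cases[of "int r1" "int x1" s \<alpha> \<beta>] r1_ge x1_ge
    unfolding sum_eq by force
  then show ?thesis
  proof cases
    case 1
    then have "z = two_block_vec x1 d \<alpha> \<beta>"
      using blocks by blast
    moreover have "two_block_vec x1 d \<alpha> \<beta> \<in> block_and_unit_points"
      using 1(2)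
    proof (elim disjE conjE)
      assume "- int r1 \<le> \<alpha>" "\<alpha> \<le> -1" "\<beta> = int x1 * \<alpha> - 1"
      then have "nat (- \<alpha>) \<in> {1..r1}"
        and "two_block_vec x1 d \<alpha> \<beta> = two_block_vec x1 d (- int (nat (- \<alpha>))) (- (int (nat (- \<alpha>)) * int x1 + 1))"
        by (auto simp: mult.commute)
      then show ?thesis
        unfolding block_and_unit_points_def by (intro UnI1 rev_image_eqI)
    qed (simp_all add: block_and_unit_points_def)
    ultimately show ?thesis
      by simp
  next
    case 2
    have "\<forall>k\<in>{1..d}. 0 \<le> z k"
    proof
      fix k assume "k \<in> {1..d}"
      then have "k \<in> {1..x1} \<or> k \<in> {x1<..d}"
        by auto
      then show "0 \<le> z k"
        using \<alpha>_le \<beta>_le 2 by force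
    qed
    then show ?thesis
      using ineqs by (rule nonneg_simplex_ineqs_in_block_and_unit_points[rotated])
  qed
qed

theorem lattice_points_eq:
  "{z :: nat \<Rightarrow> int. (\<forall>k. (k < 1 \<or> d < k) \<longrightarrow> z k = 0) \<and>
      (\<lambda>k. real_of_int (z k)) \<in> fin_conv_hull ((\<lambda>v k. real_of_int (v k)) ` (unit_vec ` {1..d} \<union> {\<lambda>k. - weights k}))}
    = block_and_unit_points"
  using mem_simplex_iff simplex_ineqs_in_block_and_unit_points block_and_unit_points_simplex_ineqs
  by blast

lemma block_and_unit_points_eq_images:
  assumes a1: "a1 = (\<lambda>k. if 1 \<le> k \<and> k \<le> x1 then -1 else if x1 < k \<and> k \<le> d then - int x1 else 0)"
    and a2: "a2 = (\<lambda>k. if x1 < k \<and> k \<le> d then -1 else 0)"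
    and "a' (r1 + 1) = a1" and "a' (r1 + 2) = a2" and "a' (r1 + 3) = (\<lambda>k. 0)"
    and a'_low: "\<And>i. 1 \<le> i \<Longrightarrow> i \<le> r1 \<Longrightarrow> a' i = (\<lambda>k. (int r1 - int i + 1) * a1 k + a2 k)"
    and b': "\<And>j. 1 \<le> j \<Longrightarrow> j \<le> d \<Longrightarrow> b' j = unit_vec (d - j + 1)"
  shows "a' ` {1..r1 + 3} \<union> b' ` {1..d} = block_and_unit_points"
proof -
  define f where "f m = two_block_vec x1 d (- int m) (- (int m * int x1 + 1))" for m
  have "a' i = f (r1 - i + 1)" if "i \<in> {1..r1}" for i
  proof -
    define m where "m = r1 - i + 1"
    have "int r1 - int i + 1 = int m"
      using that by (simp add: m_def)
    then have "a' i = (\<lambda>k. int m * a1 k + a2 k)"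
      using that a'_low[of i] by simp
    then show ?thesis
      unfolding m_def[symmetric] f_def a1 a2 by (simp add: two_block_vec_def fun_eq_iff)
  qed
  then have a'_low_image: "a' ` {1..r1} = f ` {1..r1}"
    by (rule image_reflect_atLeastAtMost)
  have a'_high: "{a' (r1 + 1), a' (r1 + 2), a' (r1 + 3)} =
      {two_block_vec x1 d (-1) (- int x1), two_block_vec x1 d 0 (-1), (\<lambda>k. 0)}"
    using assms(3-5) d_eq by (auto simp: a1 a2 two_block_vec_def fun_eq_iff)
  have b'_image: "b' ` {1..d} = unit_vec ` {1..d}"
    using b' by (intro image_reflect_atLeastAtMost) auto
  have "{1..r1 + 3} = {1..r1} \<union> {r1 + 1, r1 + 2, r1 + 3}"
    by auto
  then have "a' ` {1..r1 + 3} \<union> b' ` {1..d}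
      = a' ` {1..r1} \<union> {a' (r1 + 1), a' (r1 + 2), a' (r1 + 3)} \<union> b' ` {1..d}"
    by simp
  also have "\<dots> = block_and_unit_points"
    unfolding a'_low_image a'_high b'_image block_and_unit_points_def f_def ..
  finally show ?thesis .
qed

end

theorem theorem1p4:
  fixes r1 x1 d :: nat and q a1 a2 :: "nat \<Rightarrow> int"
    and a' b' :: "nat \<Rightarrow> nat \<Rightarrow> int"
  assumes "r1 \<ge> 2" and "x1 \<ge> 1"
    and "d = x1 + r1 - 1"
    and "q = (\<lambda>k. if 1 \<le> k \<and> k \<le> x1 then int r1
                  else if x1 < k \<and> k \<le> d then 1 + int r1 * int x1 else 0)"
    and "a1 = (\<lambda>k. if 1 \<le> k \<and> k \<le> x1 then -1
                   else if x1 < k \<and> k \<le> d then - int x1 else 0)"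
    and "a2 = (\<lambda>k. if x1 < k \<and> k \<le> d then -1 else 0)"
    and "a' (r1 + 1) = a1" and "a' (r1 + 2) = a2" and "a' (r1 + 3) = (\<lambda>k. 0)"
    and "\<And>i. 1 \<le> i \<Longrightarrow> i \<le> r1 \<Longrightarrow>
           a' i = (\<lambda>k. (int r1 - int i + 1) * a1 k + a2 k)"
    and "\<And>j. 1 \<le> j \<Longrightarrow> j \<le> d \<Longrightarrow> b' j = unit_vec (d - j + 1)"
  shows "{z :: nat \<Rightarrow> int. (\<forall>k. (k < 1 \<or> d < k) \<longrightarrow> z k = 0) \<and>
            (\<lambda>k. real_of_int (z k)) \<in>
              fin_conv_hull ((\<lambda>v k. real_of_int (v k)) `
                 ((\<lambda>i. unit_vec i) ` {1..d} \<union> {(\<lambda>k. - q k)}))}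
         = a' ` {1..r1 + 3} \<union> b' ` {1..d}"
proof -
  interpret two_block_simplex r1 x1 d
    using assms(1-3) by unfold_locales
  have "q = weights"
    unfolding assms(4) two_block_vec_def ..
  then show ?thesis
    using lattice_points_eq block_and_unit_points_eq_images[OF assms(5-11)] by simp
qed

end
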